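(* Fix a live-path graph $G_X$ (with positive subgraph $G^+$ and negative subgraph $G^-$ on vertex set $V$) and a negative seed set $N_0\subseteq V$. For $S\subseteq V\setminus N_0$ let $IBS(S)=\{v\in V: d_{G^-}(N_0,v)<\infty \text{ and } d_{G^+}(S,v)<d_{G^-}(N_0,v)\}$ (the set of nodes that are -active when the positive seed set is empty but not -active when it is $S$). Then the set function $S\mapsto |IBS(S)|$ on subsets of $V\setminus N_0$ is monotone and submodular: for all $S\subseteq T\subseteq V\setminus N_0$ and $x\in V\setminus(T\cup N_0)$, $|IBS(S)|\le|IBS(T)|$ and $|IBS(S\cup\{x\})|-|IBS(S)|\ge|IBS(T\cup\{x\})|-|IBS(T)|$.
   Context: A live-path graph $G_X$ on vertex set $V$ consists of two edge sets: $G^+$, in which every node has at most one (positive) in-edge, and $G^-$, in which every node has at most one (negative) in-edge. For $A\subseteq V$, $d_{G^+}(A,v)$ denotes the length of a shortest directed path in $G^+$ from some node of $A$ to $v$ ($0$ if $v\in A$, $\infty$ if no such path exists, and $\infty$ if $A=\emptyset$), and $d_{G^-}(A,v)$ is defined analogously in $G^-$. In $G_X$ with seeds $(P_0,N_0)$, a node $v$ is -active iff $d_{G^-}(N_0,v)<\infty$ and $d_{G^-}(N_0,v)\le d_{G^+}(P_0,v)$. *)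

theory Defs
  imports Main "HOL-Library.Extended_Nat"
begin

definition live_path_graph :: "'a set \<Rightarrow> ('a \<times> 'a) set \<Rightarrow> ('a \<times> 'a) set \<Rightarrow> bool" where
  "live_path_graph V Gp Gn \<longleftrightarrow>
     Gp \<subseteq> V \<times> V \<and> Gn \<subseteq> V \<times> V \<and>
     (\<forall>u w v. (u, v) \<in> Gp \<longrightarrow> (w, v) \<in> Gp \<longrightarrow> u = w) \<and>
     (\<forall>u w v. (u, v) \<in> Gn \<longrightarrow> (w, v) \<in> Gn \<longrightarrow> u = w)"

text \<open>Shortest directed path length in E from some node of A to v;
  infinity if no such path (in particular if A is empty). Paths of length n are E^^n.\<close>
definition dist :: "('a \<times> 'a) set \<Rightarrow> 'a set \<Rightarrow> 'a \<Rightarrow> enat" where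
  "dist E A v = (INF n \<in> {n. \<exists>u\<in>A. (u, v) \<in> E ^^ n}. enat n)"

definition IBS :: "'a set \<Rightarrow> ('a \<times> 'a) set \<Rightarrow> ('a \<times> 'a) set \<Rightarrow> 'a set \<Rightarrow> 'a set \<Rightarrow> 'a set" where
  "IBS V Gp Gn N0 S = {v \<in> V. dist Gn N0 v < \<infinity> \<and> dist Gp S v < dist Gn N0 v}"

end

theory Submission
  imports Defs
begin

(* The distance from a seed set to a node is the minimum of the distances
   from its parts, so  d(S \<union> X, v) < d(N0, v)  holds iff it holds for S or for X.  Hence
   IBS commutes with unions, IBS(S) = \<Union>_{s\<in>S} IBS({s}), i.e. S \<mapsto> |IBS(S)| is a coverage
   function, and coverage functions are monotone and submodular.
   The theorem combines these. *)

lemma dist_union: "dist E (A \<union> B) v = min (dist E A v) (dist E B v)"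
proof -
  have "{n. \<exists>u\<in>A \<union> B. (u, v) \<in> E ^^ n} =
        {n. \<exists>u\<in>A. (u, v) \<in> E ^^ n} \<union> {n. \<exists>u\<in>B. (u, v) \<in> E ^^ n}"
    by blast
  then show ?thesis unfolding dist_def by (simp add: INF_union inf_min)
qed

lemma dist_antimono: "A \<subseteq> B \<Longrightarrow> dist E B v \<le> dist E A v"
  unfolding dist_def by (rule INF_superset_mono) auto

lemma IBS_union: "IBS V Gp Gn N0 (S \<union> X) = IBS V Gp Gn N0 S \<union> IBS V Gp Gn N0 X"
  unfolding IBS_def dist_union by (auto simp: min_less_iff_disj)

lemma IBS_mono: "S \<subseteq> T \<Longrightarrow> IBS V Gp Gn N0 S \<subseteq> IBS V Gp Gn N0 T"
  unfolding IBS_def using dist_antimono[of S T Gp] by (auto intro: le_less_trans)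

lemma IBS_subset: "IBS V Gp Gn N0 S \<subseteq> V"
  unfolding IBS_def by auto

lemma card_union_gain:
  assumes "finite A" "finite F"
  shows "int (card (A \<union> F)) - int (card A) = int (card (F - A))"
proof -
  have "A \<union> F = A \<union> (F - A)" by blast
  moreover have "card (A \<union> (F - A)) = card A + card (F - A)"
    using assms by (intro card_Un_disjoint) auto
  ultimately show ?thesis by simp
qed

lemma card_union_gain_antimono:
  assumes "finite B" "finite F" "A \<subseteq> B"
  shows "int (card (B \<union> F)) - int (card B) \<le> int (card (A \<union> F)) - int (card A)"
proof -
  have "finite A" using assms finite_subset by blast
  have "card (F - B) \<le> card (F - A)"
    using assms by (intro card_mono) auto
  then show ?thesis
    using card_union_gain[OF \<open>finite A\<close> \<open>finite F\<close>] card_union_gain[OF \<open>finite B\<close> \<open>finite F\<close>]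
    by simp
qed

theorem lemma5:
  fixes V :: "'a set" and Gp Gn :: "('a \<times> 'a) set" and N0 :: "'a set"
  assumes "finite V"
    and "live_path_graph V Gp Gn"
    and "N0 \<subseteq> V"
  shows "\<forall>S T x. S \<subseteq> T \<longrightarrow> T \<subseteq> V - N0 \<longrightarrow> x \<in> V - (T \<union> N0) \<longrightarrow>
           card (IBS V Gp Gn N0 S) \<le> card (IBS V Gp Gn N0 T) \<and>
           int (card (IBS V Gp Gn N0 (S \<union> {x}))) - int (card (IBS V Gp Gn N0 S))
             \<ge> int (card (IBS V Gp Gn N0 (T \<union> {x}))) - int (card (IBS V Gp Gn N0 T))"
proof (intro allI impI)
  fix S T :: "'a set" and x
  assume "S \<subseteq> T"
  let ?I = "IBS V Gp Gn N0"
  have finite_IBS: "finite (?I U)" for U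
    using assms(1) IBS_subset finite_subset by metis
  have "?I S \<subseteq> ?I T" using IBS_mono[OF \<open>S \<subseteq> T\<close>] .
  then have "card (?I S) \<le> card (?I T)"
    and "int (card (?I T \<union> ?I {x})) - int (card (?I T))
           \<le> int (card (?I S \<union> ?I {x})) - int (card (?I S))"
    by (intro card_mono card_union_gain_antimono finite_IBS; assumption)+
  then show "card (?I S) \<le> card (?I T) \<and>
           int (card (?I (S \<union> {x}))) - int (card (?I S))
             \<ge> int (card (?I (T \<union> {x}))) - int (card (?I T))"
    unfolding IBS_union by simp
qed

end
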